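(* Let $\mathbf r=(M,\Delta)$ be an RSP (realization spectrum problem, as defined in the context) with associated preorder $(\mathscr T,\le_{\mathscr T})$ and model $N=N_{\mathbf r}$. Let $\kappa=\min\{\mathfrak t_{\mathbf r},\mathfrak p_{\mathbf r}\}$. Then $N$ is $(\kappa,1,\Delta)$-saturated, i.e. whenever $p(x)$ is a set of fewer than $\kappa$ formulas of the form $\varphi(x,\bar a)$ with $\varphi(x,\bar y)\in\Delta$ and $\bar a$ a tuple from $N$, and $p$ is finitely satisfiable in $N$, then $p$ is realized in $N$.
   Context: An RSP $\mathbf r=(M,\Delta)$ consists of: (a) a model $M$; (b) predicates $\mathscr T,\le_{\mathscr T}$ and an individual constant $c$ of $\tau_M$ such that $\le_{\mathscr T}^M$ is a preorder on $\mathscr T^M$ (reflexive and transitive; antisymmetry is not required) and $\mathrm{rt}:=c^M\in\mathscr T^M$ satisfies $\mathrm{rt}\le_{\mathscr T} t$ for all $t\in\mathscr T^M$; (c) a unary predicate $P$ and a model $N$ with universe $P^M$ and vocabulary $\tau_N\subseteq\tau_M$, whose relations and functions are those of $M$ (so formulas of $\tau_N$ are interpreted in $M$ with all variables ranging over $P^M$); (d) a set $\Delta$ of first-order formulas $\varphi(x,\bar y)$ of $\tau_N$ closed under conjunctions (if $\varphi_1(x,\bar y_1),\varphi_2(x,\bar y_2)\in\Delta$ then $\varphi_1(x,\bar y_1')\wedge\varphi_2(x,\bar y_2'')\in\Delta$); write $\Delta(N)=\{\varphi(x,\bar a):\varphi(x,\bar y)\in\Delta,\ \bar a$ from $N\}$;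 (e) a binary relation $R^M\subseteq |N|\times\mathscr T^M$, and for $t\in\mathscr T^M$ put $R_t=\{b: bR^Mt\}$; (f) $R_{\mathrm{rt}}=|N|$; (g) if $s\le_{\mathscr T}t$ then $R_s\supseteq R_t$; (h) $R_t\neq\emptyset$ for every $t\in\mathscr T^M$; (i) if $s\in\mathscr T^M$, $\varphi(x,\bar a)\in\Delta(N)$ and some $b\in R_s$ satisfies $N\models\varphi[b,\bar a]$, then there is $t\in\mathscr T^M$ with $s\le_{\mathscr T}t$ and $R_t=\{b\in R_s:N\models\varphi[b,\bar a]\}$; (j) for each $\varphi\in\Delta$ there is a function $F_{\varphi,2}$ of $M$ such that whenever $t\in\mathscr T^M$, $\varphi(x,\bar a)\in\Delta(N)$ and $\varphi(N,\bar a)\ne\emptyset$, the element $s=F_{\varphi,2}(t,\bar a)$ satisfies $s\le_{\mathscr T}t$, $R_s\cap\varphi(N,\bar a)\neq\emptyset$, and every $s_1\le_{\mathscr T}t$ with $R_{s_1}\cap\varphi(N,\bar a)\ne\emptyset$ satisfies $s_1\le_{\mathscr T}s$. For a preorder $(\mathscr T,\le)$: write $s<t$ for $s\le t\wedge s\ne t$. $\mathfrak t_{\mathbf r}$ is the least infinite cardinal $\kappa$ such that there is a $<$-increasing sequence of length $\kappa$ in $\mathscr T^M$ with no upper bound. A $(\kappa_1,\kappa_2)$-pre-cut is a pair $(C_1,C_2)$ of subsets with $C_1\cup C_2$ linearly ordered by $\le$, $a_1\le a_2$ for all $a_1\in C_1,a_2\in C_2$, no $c$ with $a_1\le c\le a_2$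 for all $a_1\in C_1,a_2\in C_2$, $C_1$ of cofinality $\kappa_1$ and $C_2$ with the reversed order of cofinality $\kappa_2$. $\mathfrak p_{\mathbf r}=\min\{\kappa_1+\kappa_2:\kappa_1,\kappa_2\ge\aleph_0$ and $(\mathscr T^M,\le_{\mathscr T})$ has a $(\kappa_1,\kappa_2)$-pre-cut$\}$. *)

theory Defs
  imports Main
begin

text \<open>The universe of M is (a subset of) the type 'a.
  T is the set \<T>^M, le the relation \<le>_\<T>, rt = c^M, N the universe P^M of the model N,
  R the relation R^M. A formula phi(x,y1..yn) of Delta is represented by the pair (n, phi)
  where phi b as means N |= phi[b, as] (as a list of length n).\<close>

type_synonym 'a fml = "nat \<times> ('a \<Rightarrow> 'a list \<Rightarrow> bool)"

definition Rset :: "('a \<Rightarrow> 'a \<Rightarrow> bool) \<Rightarrow> 'a \<Rightarrow> 'a set" where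
  "Rset R t = {b. R b t}"

definition params :: "'a set \<Rightarrow> nat \<Rightarrow> 'a list set" where
  "params N n = {as. length as = n \<and> set as \<subseteq> N}"

definition inst :: "'a fml set \<Rightarrow> 'a set \<Rightarrow> ('a fml \<times> 'a list) set" where
  "inst Delta N = {(f, as). f \<in> Delta \<and> as \<in> params N (fst f)}"

definition RSP ::
  "'a set \<Rightarrow> ('a \<Rightarrow> 'a \<Rightarrow> bool) \<Rightarrow> 'a \<Rightarrow> 'a set \<Rightarrow> ('a \<Rightarrow> 'a \<Rightarrow> bool) \<Rightarrow> 'a fml set \<Rightarrow> bool"
where
  "RSP T le rt N R Delta \<longleftrightarrow>
     \<comment> \<open>(b) preorder with root\<close>
     (\<forall>t\<in>T. le t t) \<and>
     (\<forall>s\<in>T. \<forall>t\<in>T. \<forall>u\<in>T. le s t \<longrightarrow> le t u \<longrightarrow> le s u) \<and>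
     rt \<in> T \<and> (\<forall>t\<in>T. le rt t) \<and>
     \<comment> \<open>(d) closure of Delta under conjunctions (with disjoint parameter tuples)\<close>
     (\<forall>n1 phi1 n2 phi2. (n1, phi1) \<in> Delta \<longrightarrow> (n2, phi2) \<in> Delta \<longrightarrow>
        (n1 + n2, \<lambda>x ys. phi1 x (take n1 ys) \<and> phi2 x (drop n1 ys)) \<in> Delta) \<and>
     \<comment> \<open>(e) R \<subseteq> |N| \<times> T\<close>
     (\<forall>b t. R b t \<longrightarrow> b \<in> N \<and> t \<in> T) \<and>
     \<comment> \<open>(f)\<close>
     Rset R rt = N \<and>
     \<comment> \<open>(g)\<close>
     (\<forall>s\<in>T. \<forall>t\<in>T. le s t \<longrightarrow> Rset R t \<subseteq> Rset R s) \<and>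
     \<comment> \<open>(h)\<close>
     (\<forall>t\<in>T. Rset R t \<noteq> {}) \<and>
     \<comment> \<open>(i)\<close>
     (\<forall>s\<in>T. \<forall>n phi as. (n, phi) \<in> Delta \<longrightarrow> as \<in> params N n \<longrightarrow>
        (\<exists>b\<in>Rset R s. phi b as) \<longrightarrow>
        (\<exists>t\<in>T. le s t \<and> Rset R t = {b\<in>Rset R s. phi b as})) \<and>
     \<comment> \<open>(j)\<close>
     (\<forall>n phi. (n, phi) \<in> Delta \<longrightarrow>
        (\<exists>F. \<forall>t\<in>T. \<forall>as\<in>params N n. (\<exists>b\<in>N. phi b as) \<longrightarrow>
           (F t as \<in> T \<and> le (F t as) t \<and> (\<exists>b\<in>Rset R (F t as). phi b as) \<and>
            (\<forall>s1\<in>T. le s1 t \<longrightarrow> (\<exists>b\<in>Rset R s1. phi b as) \<longrightarrow> le s1 (F t as)))))"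

definition strict :: "('a \<Rightarrow> 'a \<Rightarrow> bool) \<Rightarrow> 'a \<Rightarrow> 'a \<Rightarrow> bool" where
  "strict le s t \<longleftrightarrow> le s t \<and> s \<noteq> t"

text \<open>There is a strictly increasing sequence in T of length |I| (indexed by the initial
  ordinal, i.e. a cardinal well-order r on I) with no upper bound in T.\<close>
definition unbounded_seq ::
  "'a set \<Rightarrow> ('a \<Rightarrow> 'a \<Rightarrow> bool) \<Rightarrow> 'b set \<Rightarrow> 'b rel \<Rightarrow> bool" where
  "unbounded_seq T le I r \<longleftrightarrow>
     (\<exists>f. f ` I \<subseteq> T \<and>
          (\<forall>i\<in>I. \<forall>j\<in>I. (i, j) \<in> r \<and> i \<noteq> j \<longrightarrow> strict le (f i) (f j)) \<and>
          \<not> (\<exists>u\<in>T. \<forall>i\<in>I. le (f i) u))"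

text \<open>|A| < t_r: no infinite cardinal kappa \<le> |A| (represented by a subset I of A with a
  cardinal well-order) carries an unbounded strictly increasing sequence.\<close>
definition card_below_t :: "'a set \<Rightarrow> ('a \<Rightarrow> 'a \<Rightarrow> bool) \<Rightarrow> 'b set \<Rightarrow> bool" where
  "card_below_t T le A \<longleftrightarrow>
     (\<forall>I r. I \<subseteq> A \<longrightarrow> infinite I \<longrightarrow> card_order_on I r \<longrightarrow> \<not> unbounded_seq T le I r)"

definition precut :: "'a set \<Rightarrow> ('a \<Rightarrow> 'a \<Rightarrow> bool) \<Rightarrow> 'a set \<Rightarrow> 'a set \<Rightarrow> bool" where
  "precut T le C1 C2 \<longleftrightarrow>
     C1 \<subseteq> T \<and> C2 \<subseteq> T \<and>
     \<comment> \<open>C1 \<union> C2 linearly ordered by le\<close>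
     (\<forall>a\<in>C1 \<union> C2. \<forall>b\<in>C1 \<union> C2. le a b \<or> le b a) \<and>
     (\<forall>a\<in>C1 \<union> C2. \<forall>b\<in>C1 \<union> C2. le a b \<longrightarrow> le b a \<longrightarrow> a = b) \<and>
     (\<forall>a1\<in>C1. \<forall>a2\<in>C2. le a1 a2) \<and>
     \<not> (\<exists>c\<in>T. \<forall>a1\<in>C1. \<forall>a2\<in>C2. le a1 c \<and> le c a2)"

definition cofinal :: "('a \<Rightarrow> 'a \<Rightarrow> bool) \<Rightarrow> 'a set \<Rightarrow> 'a set \<Rightarrow> bool" where
  "cofinal le C D \<longleftrightarrow> D \<subseteq> C \<and> (\<forall>c\<in>C. \<exists>d\<in>D. le c d)"

text \<open>cf(C, le) is infinite and \<le> |A|.\<close>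
definition cf_inf_le :: "('a \<Rightarrow> 'a \<Rightarrow> bool) \<Rightarrow> 'a set \<Rightarrow> 'b set \<Rightarrow> bool" where
  "cf_inf_le le C A \<longleftrightarrow>
     \<not> (\<exists>D. finite D \<and> cofinal le C D) \<and>
     (\<exists>D. cofinal le C D \<and> (\<exists>g. inj_on g D \<and> g ` D \<subseteq> A))"

text \<open>|A| < p_r: there is no (kappa1,kappa2)-pre-cut with kappa1, kappa2 infinite and
  kappa1 + kappa2 \<le> |A| (i.e. both \<le> |A|).\<close>
definition card_below_p :: "'a set \<Rightarrow> ('a \<Rightarrow> 'a \<Rightarrow> bool) \<Rightarrow> 'b set \<Rightarrow> bool" where
  "card_below_p T le A \<longleftrightarrow>
     \<not> (\<exists>C1 C2. precut T le C1 C2 \<and> cf_inf_le le C1 A \<and> cf_inf_le (\<lambda>x y. le y x) C2 A)"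

definition realized :: "'a set \<Rightarrow> ('a fml \<times> 'a list) set \<Rightarrow> bool" where
  "realized N p \<longleftrightarrow> (\<exists>b\<in>N. \<forall>(f, as)\<in>p. snd f b as)"

definition fin_sat :: "'a set \<Rightarrow> ('a fml \<times> 'a list) set \<Rightarrow> bool" where
  "fin_sat N p \<longleftrightarrow> (\<forall>q\<subseteq>p. finite q \<longrightarrow> realized N q)"

end

theory Submission
  imports Defs "HOL-Algebra.Free_Abelian_Groups"
begin

text \<open>
  Call a node t good if every finite part of p is realized in R_t. A good node can be refined
  to force any single formula of p (clause (i)), and a chain of good nodes of size at most |p|
  has a good upper bound: since |p| < t_r the chain has an upper bound; above the chain and
  below that bound, a maximal chain of nodes realizing the finite parts of p exists by Zorn's
  lemma and clause (j), and since |p| < p_r some node v lies between the two chains. By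
  maximality every finite part of p is realized below v, so v is good. A maximal chain of good
  nodes forcing the formulas of p one at a time then covers all of p, and every element of R
  at a good upper bound of it realizes p.
\<close>

unbundle cardinal_syntax

lemma chain_dual:
  "Complete_Partial_Order.chain (\<lambda>x y. leq y x) C \<longleftrightarrow> Complete_Partial_Order.chain leq C"
  unfolding chain_def by blast

lemma chain_insert:
  "Complete_Partial_Order.chain leq C \<Longrightarrow> leq s s \<Longrightarrow> \<forall>c\<in>C. leq c s \<or> leq s c \<Longrightarrow>
    Complete_Partial_Order.chain leq (insert s C)"
  unfolding chain_def by blast

lemma card_of_Range_le_Domain:
  assumes "single_valued M"
  shows "|Range M| \<le>o |Domain M|"
proof -
  have "Range M \<subseteq> (\<lambda>x. THE y. (x, y) \<in> M) ` Domain M"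
  proof
    fix y assume "y \<in> Range M"
    then obtain x where xy: "(x, y) \<in> M" by blast
    then have "(THE y. (x, y) \<in> M) = y"
      using assms by (blast dest: single_valuedD)
    then show "y \<in> (\<lambda>x. THE y. (x, y) \<in> M) ` Domain M" using xy by force
  qed
  then show ?thesis
    using card_of_mono1 card_of_image ordLeq_transitive by metis
qed

lemma maximal_function_with_chain_range:
  fixes leq :: "'a \<Rightarrow> 'a \<Rightarrow> bool" and X :: "'b set"
  obtains M where "M \<subseteq> X \<times> U" "single_valued M" "Complete_Partial_Order.chain leq (Range M)"
    "\<forall>(x, s)\<in>M. P x s"
    "\<And>x s. x \<in> X \<Longrightarrow> x \<notin> Domain M \<Longrightarrow> s \<in> U \<Longrightarrow>
       Complete_Partial_Order.chain leq (insert s (Range M)) \<Longrightarrow> P x s \<Longrightarrow> False"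
proof -
  define A where "A = {W. W \<subseteq> X \<times> U \<and> single_valued W \<and>
    Complete_Partial_Order.chain leq (Range W) \<and> (\<forall>(x, s)\<in>W. P x s)}"
  have "\<Union>C \<in> A" if C: "C \<in> chains A" for C
  proof -
    have CA: "C \<subseteq> A" using C unfolding chains_def by blast
    have common_member: "\<exists>W\<in>C. a \<in> W \<and> b \<in> W" if "a \<in> \<Union>C" "b \<in> \<Union>C" for a b
      using that C unfolding chains_def chain_subset_def by blast
    have "single_valued (\<Union>C)"
    proof (rule single_valuedI)
      fix x y z assume "(x, y) \<in> \<Union>C" "(x, z) \<in> \<Union>C"
      then obtain W where "W \<in> C" "(x, y) \<in> W" "(x, z) \<in> W" using common_member by blast
      then show "y = z" using CA unfolding A_def by (auto dest: single_valuedD)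
    qed
    moreover have "Complete_Partial_Order.chain leq (Range (\<Union>C))"
      unfolding chain_def
    proof (intro ballI)
      fix y z assume "y \<in> Range (\<Union>C)" "z \<in> Range (\<Union>C)"
      then obtain a b where "(a, y) \<in> \<Union>C" "(b, z) \<in> \<Union>C" by blast
      then obtain W where "W \<in> C" "(a, y) \<in> W" "(b, z) \<in> W" using common_member by blast
      then show "leq y z \<or> leq z y" using CA unfolding A_def chain_def by blast
    qed
    ultimately show ?thesis using CA unfolding A_def by blast
  qed
  then obtain M where M: "M \<in> A" "\<forall>W\<in>A. M \<subseteq> W \<longrightarrow> W = M"
    using Zorn_Lemma[of A] by blast
  show ?thesis
  proof (rule that)
    show "M \<subseteq> X \<times> U" "single_valued M" "Complete_Partial_Order.chain leq (Range M)"
      "\<forall>(x, s)\<in>M. P x s"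
      using M(1) unfolding A_def by blast+
  next
    fix x s assume new: "x \<in> X" "x \<notin> Domain M" "s \<in> U"
      and "Complete_Partial_Order.chain leq (insert s (Range M))" "P x s"
    then have "insert (x, s) M \<in> A"
      using M(1) unfolding A_def by (auto simp: single_valued_def)
    then have "(x, s) \<in> M" using M(2) by blast
    then show False using new(2) by blast
  qed
qed

lemma transfinite_selection_above_predecessors:
  assumes r: "card_order_on J r"
    and step: "\<And>X k. X \<subseteq> J \<Longrightarrow> |X| <o |J| \<Longrightarrow> k \<in> J \<Longrightarrow> \<exists>c\<in>J. Q k c \<and> (\<forall>x\<in>X. S x c)"
  obtains f where "\<forall>k\<in>J. f k \<in> J \<and> Q k (f k)"
    "\<And>i j. i \<in> J \<Longrightarrow> j \<in> J \<Longrightarrow> (i, j) \<in> r \<Longrightarrow> i \<noteq> j \<Longrightarrow> S (f i) (f j)"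
proof -
  have Fr: "Field r = J" and Cr: "Card_order r"
    using card_order_on_Card_order[OF r] by auto
  have wf: "wf (r - Id)"
    using Cr card_order_on_def wo_rel.WF wo_rel_def by blast
  define X where "X g k = g ` underS r k \<inter> J" for g :: "'a \<Rightarrow> 'a" and k
  have X_small: "|X g k| <o |J|" if "k \<in> J" for g k
  proof -
    have "|X g k| \<le>o |g ` underS r k|" unfolding X_def by (rule card_of_mono1) auto
    also have "|g ` underS r k| \<le>o |underS r k|" by (rule card_of_image)
    also have "|underS r k| <o r" using card_of_underS[OF Cr] that Fr by simp
    also have "r =o |J|" using card_of_unique[OF r] .
    finally show ?thesis .
  qed
  define H where "H g k = (SOME c. c \<in> J \<and> Q k c \<and> (\<forall>x\<in>X g k. S x c))" for g k
  have H: "H g k \<in> J" "Q k (H g k)" "\<forall>x\<in>X g k. S x (H g k)" if "k \<in> J" for g k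
  proof -
    have "\<exists>c. c \<in> J \<and> Q k c \<and> (\<forall>x\<in>X g k. S x c)"
      using step[OF _ X_small[OF that] that] unfolding X_def by blast
    then have "H g k \<in> J \<and> Q k (H g k) \<and> (\<forall>x\<in>X g k. S x (H g k))"
      unfolding H_def by (rule someI_ex)
    then show "H g k \<in> J" "Q k (H g k)" "\<forall>x\<in>X g k. S x (H g k)" by blast+
  qed
  \<comment> \<open>f k is chosen above the values f takes on the r-predecessors of k\<close>
  define f where "f = wfrec (r - Id) H"
  have f_eq: "f k = H (cut f (r - Id) k) k" for k
    unfolding f_def by (rule wfrec[OF wf])
  have "\<forall>k\<in>J. f k \<in> J \<and> Q k (f k)" using H(1,2) f_eq by metis
  moreover have "S (f i) (f j)" if ij: "i \<in> J" "j \<in> J" "(i, j) \<in> r" "i \<noteq> j" for i j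
  proof -
    have "f i \<in> J" using H(1) f_eq ij(1) by metis
    then have "f i \<in> X (cut f (r - Id) j) j"
      using ij unfolding X_def underS_def by (auto simp: cut_apply)
    then show ?thesis using H(3)[OF ij(2)] f_eq[of j] by metis
  qed
  ultimately show ?thesis using that by blast
qed

text \<open>Pre-cuts are antisymmetric, so a chain of the preorder is replaced by representatives of
  its equivalence classes.\<close>

definition equiv_rep :: "('a \<Rightarrow> 'a \<Rightarrow> bool) \<Rightarrow> 'a set \<Rightarrow> 'a \<Rightarrow> 'a" where
  "equiv_rep leq S x = (SOME y. y \<in> S \<and> leq x y \<and> leq y x)"

lemma equiv_rep_dual: "equiv_rep (\<lambda>x y. leq y x) = equiv_rep leq"
  unfolding equiv_rep_def by (simp add: conj_commute)

locale preordered_set =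
  fixes T :: "'a set" and leq :: "'a \<Rightarrow> 'a \<Rightarrow> bool"
  assumes refl: "t \<in> T \<Longrightarrow> leq t t"
    and trans: "s \<in> T \<Longrightarrow> t \<in> T \<Longrightarrow> u \<in> T \<Longrightarrow> leq s t \<Longrightarrow> leq t u \<Longrightarrow> leq s u"
begin

abbreviation is_chain :: "'a set \<Rightarrow> bool" where
  "is_chain C \<equiv> Complete_Partial_Order.chain leq C"

lemma dual: "preordered_set T (\<lambda>x y. leq y x)"
proof
  show "leq t t" if "t \<in> T" for t using refl[OF that] .
  show "leq u s" if "s \<in> T" "t \<in> T" "u \<in> T" "leq t s" "leq u t" for s t u
    using trans[OF that(3,2,1) that(5,4)] .
qed

lemma finite_chain_has_greatest:
  assumes "finite C" "C \<noteq> {}" "C \<subseteq> T" "is_chain C"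
  shows "\<exists>m\<in>C. \<forall>c\<in>C. leq c m"
  using assms
proof (induction C rule: finite_ne_induct)
  case (singleton x)
  then show ?case by (auto intro: refl)
next
  case (insert x C)
  then obtain m where m: "m \<in> C" "\<forall>c\<in>C. leq c m"
    using chain_subset by blast
  show ?case
  proof (cases "leq m x")
    case True
    have "leq c x" if "c \<in> insert x C" for c
    proof (cases "c = x")
      case False
      then show ?thesis using that m True insert.prems trans[of c m x] by blast
    qed (use insert.prems refl in blast)
    then have "\<forall>c\<in>insert x C. leq c x" by blast
    then show ?thesis by blast
  next
    case False
    then have "leq x m" using m insert.prems unfolding chain_def by blast
    then show ?thesis using m by auto
  qed
qed

lemma strictly_above_in_unbounded_chain:
  assumes C: "C \<subseteq> T" "is_chain C" "\<not> (\<exists>u\<in>T. \<forall>c\<in>C. leq c u)"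
    and Y: "Y \<subseteq> C" "u \<in> T" "\<forall>y\<in>Y. leq y u"
    and k: "k \<in> C"
  shows "\<exists>c\<in>C. leq k c \<and> (\<forall>y\<in>Y. leq y c \<and> \<not> leq c y)"
proof -
  have lin: "leq x y \<or> leq y x" if "x \<in> C" "y \<in> C" for x y
    using C(2) that unfolding chain_def by blast
  have CT: "x \<in> C \<Longrightarrow> x \<in> T" for x using C(1) by blast
  have "\<exists>c0\<in>C. \<forall>y\<in>Y. leq y c0"
  proof (rule ccontr)
    assume none: "\<not> ?thesis"
    have "leq c u" if c: "c \<in> C" for c
    proof -
      obtain y where y: "y \<in> Y" "\<not> leq y c" using none c by blast
      then have "leq c y" using lin c Y(1) by blast
      then show ?thesis using trans[OF CT[OF c] _ Y(2)] y Y CT by blast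
    qed
    then show False using C(3) Y(2) by blast
  qed
  then obtain c0 where c0: "c0 \<in> C" "\<forall>y\<in>Y. leq y c0" by blast
  obtain c1 where c1: "c1 \<in> C" "leq k c1" "\<forall>y\<in>Y. leq y c1"
  proof (cases "leq k c0")
    case True
    then show ?thesis using that c0 by blast
  next
    case False
    then have "leq c0 k" using lin k c0(1) by blast
    then have "leq y k" if "y \<in> Y" for y
      using c0 k that Y(1) CT trans[of y c0 k] by blast
    then show ?thesis using that[OF k refl[OF CT[OF k]]] by blast
  qed
  obtain c where c: "c \<in> C" "\<not> leq c c1"
    using C(3) c1(1) CT by blast
  then have c1c: "leq c1 c" using lin c1(1) by blast
  have "leq k c" using trans[of k c1 c] c1 c1c c k CT by blast
  moreover have "leq y c \<and> \<not> leq c y" if "y \<in> Y" for y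
    using trans[of y c1 c] trans[of c y c1] c c1 c1c that Y(1) CT by blast
  ultimately show ?thesis using c(1) by blast
qed

lemma unbounded_seq_of_unbounded_chain:
  assumes hJ: "h ` J \<subseteq> T" "is_chain (h ` J)"
    and unbounded: "\<not> (\<exists>u\<in>T. \<forall>j\<in>J. leq (h j) u)"
    and small_bounded: "\<And>X. X \<subseteq> J \<Longrightarrow> |X| <o |J| \<Longrightarrow> \<exists>u\<in>T. \<forall>j\<in>X. leq (h j) u"
    and r: "card_order_on J r"
  shows "unbounded_seq T leq J r"
proof -
  have unbounded_image: "\<not> (\<exists>u\<in>T. \<forall>c\<in>h ` J. leq c u)"
    using unbounded by auto
  have step: "\<exists>c\<in>J. leq (h k) (h c) \<and> (\<forall>x\<in>X. leq (h x) (h c) \<and> \<not> leq (h c) (h x))"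
    if X: "X \<subseteq> J" "|X| <o |J|" and k: "k \<in> J" for X k
  proof -
    obtain u where u: "u \<in> T" "\<forall>y\<in>h ` X. leq y u"
      using small_bounded[OF X] by blast
    obtain c' where "c' \<in> h ` J" "leq (h k) c'" "\<forall>y\<in>h ` X. leq y c' \<and> \<not> leq c' y"
      using strictly_above_in_unbounded_chain[OF hJ unbounded_image image_mono[OF X(1)] u
          imageI[OF k]]
      by blast
    then show ?thesis by blast
  qed
  obtain f where f: "\<forall>k\<in>J. f k \<in> J \<and> leq (h k) (h (f k))"
    and f_strict: "\<And>i j. i \<in> J \<Longrightarrow> j \<in> J \<Longrightarrow> (i, j) \<in> r \<Longrightarrow> i \<noteq> j \<Longrightarrow>
      leq (h (f i)) (h (f j)) \<and> \<not> leq (h (f j)) (h (f i))"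
    using transfinite_selection_above_predecessors[where Q = "\<lambda>k c. leq (h k) (h c)"
        and S = "\<lambda>x c. leq (h x) (h c) \<and> \<not> leq (h c) (h x)", OF r step]
    by blast
  show ?thesis
    unfolding unbounded_seq_def
  proof (intro exI[of _ "h \<circ> f"] conjI)
    show "(h \<circ> f) ` J \<subseteq> T" using f hJ(1) by auto
    show "\<forall>i\<in>J. \<forall>j\<in>J. (i, j) \<in> r \<and> i \<noteq> j \<longrightarrow> strict leq ((h \<circ> f) i) ((h \<circ> f) j)"
      using f_strict unfolding strict_def by (metis comp_apply)
    show "\<not> (\<exists>u\<in>T. \<forall>i\<in>J. leq ((h \<circ> f) i) u)"
    proof
      assume "\<exists>u\<in>T. \<forall>i\<in>J. leq ((h \<circ> f) i) u"
      then obtain u where u: "u \<in> T" "\<forall>i\<in>J. leq (h (f i)) u" by auto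
      have "leq (h i) u" if "i \<in> J" for i
        using trans[of "h i" "h (f i)" u] f u that hJ(1) by blast
      then show False using unbounded u(1) by blast
    qed
  qed
qed


lemma equiv_rep:
  assumes "S \<subseteq> T" "x \<in> S"
  shows "equiv_rep leq S x \<in> S" "leq x (equiv_rep leq S x)" "leq (equiv_rep leq S x) x"
proof -
  have "\<exists>y. y \<in> S \<and> leq x y \<and> leq y x" using assms refl by blast
  then show "equiv_rep leq S x \<in> S" "leq x (equiv_rep leq S x)" "leq (equiv_rep leq S x) x"
    unfolding equiv_rep_def by (metis (mono_tags, lifting) someI_ex)+
qed

lemma equiv_rep_le_iff:
  assumes "S \<subseteq> T" "x \<in> S" "y \<in> S"
  shows "leq (equiv_rep leq S x) (equiv_rep leq S y) \<longleftrightarrow> leq x y"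
  using equiv_rep[OF assms(1,2)] equiv_rep[OF assms(1,3)] assms trans
  by (meson subsetD)

lemma equiv_rep_eq:
  assumes "S \<subseteq> T" "x \<in> S" "y \<in> S" "leq x y" "leq y x"
  shows "equiv_rep leq S x = equiv_rep leq S y"
proof -
  have "z \<in> S \<and> leq x z \<and> leq z x \<longleftrightarrow> z \<in> S \<and> leq y z \<and> leq z y" for z
    using assms trans by (meson subsetD)
  then show ?thesis unfolding equiv_rep_def by simp
qed

lemma cf_inf_le_equiv_rep_image:
  assumes S: "K \<subseteq> S" "S \<subseteq> T" "is_chain S"
    and K: "K \<noteq> {}" "\<not> (\<exists>k0\<in>K. \<forall>k\<in>K. leq k k0)" "|K| \<le>o |A|"
  shows "cf_inf_le leq (equiv_rep leq S ` K) A"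
  unfolding cf_inf_le_def
proof (intro conjI)
  let ?C = "equiv_rep leq S ` K"
  have C_sub: "?C \<subseteq> S" using equiv_rep(1)[OF S(2)] S(1) by blast
  show "\<not> (\<exists>D. finite D \<and> cofinal leq ?C D)"
  proof
    assume "\<exists>D. finite D \<and> cofinal leq ?C D"
    then obtain D where D: "finite D" "D \<subseteq> ?C" "\<forall>c\<in>?C. \<exists>d\<in>D. leq c d"
      unfolding cofinal_def by blast
    have "D \<noteq> {}" using D(2,3) K(1) by blast
    then obtain m where m: "m \<in> D" "\<forall>d\<in>D. leq d m"
      using finite_chain_has_greatest[OF D(1)] D(2) C_sub S(2,3) chain_subset
      by (metis subset_trans)
    obtain k0 where k0: "k0 \<in> K" "m = equiv_rep leq S k0" using m(1) D(2) by blast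
    have "leq k k0" if k: "k \<in> K" for k
    proof -
      obtain d where d: "d \<in> D" "leq (equiv_rep leq S k) d" using D(3) k by blast
      have "leq (equiv_rep leq S k) m"
        using trans[OF _ _ _ d(2) m(2)[rule_format, OF d(1)]] d(1) m(1) k D(2) C_sub S(1,2)
        by blast
      then show ?thesis using equiv_rep_le_iff[OF S(2)] k k0 S(1) by blast
    qed
    then show False using K(2) k0(1) by blast
  qed
  have "|?C| \<le>o |A|" using card_of_image ordLeq_transitive K(3) by blast
  moreover have "cofinal leq ?C ?C"
    unfolding cofinal_def using C_sub S(2) refl by blast
  ultimately show "\<exists>D. cofinal leq ?C D \<and> (\<exists>g. inj_on g D \<and> g ` D \<subseteq> A)"
    unfolding card_of_ordLeq[symmetric] by blast
qed

lemma precut_equiv_rep_images: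
  assumes "K \<subseteq> T" "D \<subseteq> T" "is_chain (K \<union> D)" "\<forall>k\<in>K. \<forall>d\<in>D. leq k d"
    and "K \<noteq> {}" "D \<noteq> {}"
    and no_between: "\<not> (\<exists>c\<in>T. (\<forall>k\<in>K. leq k c) \<and> (\<forall>d\<in>D. leq c d))"
  shows "precut T leq (equiv_rep leq (K \<union> D) ` K) (equiv_rep leq (K \<union> D) ` D)"
proof -
  define S where "S = K \<union> D"
  define rep where "rep = equiv_rep leq S"
  have ST: "S \<subseteq> T" using assms(1,2) unfolding S_def by blast
  have rep: "rep x \<in> S" "leq x (rep x)" "leq (rep x) x" if "x \<in> S" for x
    using equiv_rep[OF ST that] unfolding rep_def by blast+
  have rep_le_iff: "leq (rep x) (rep y) \<longleftrightarrow> leq x y" if "x \<in> S" "y \<in> S" for x y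
    using equiv_rep_le_iff[OF ST that] unfolding rep_def .
  have lin: "leq x y \<or> leq y x" if "x \<in> S" "y \<in> S" for x y
    using assms(3) that unfolding chain_def S_def by blast
  have union: "rep ` K \<union> rep ` D = rep ` S" unfolding S_def by blast
  have "precut T leq (rep ` K) (rep ` D)"
    unfolding precut_def union
  proof (intro conjI)
    show "rep ` K \<subseteq> T" "rep ` D \<subseteq> T" using rep(1) ST unfolding S_def by blast+
    show "\<forall>a\<in>rep ` S. \<forall>b\<in>rep ` S. leq a b \<or> leq b a"
      using lin rep_le_iff by blast
    show "\<forall>a\<in>rep ` S. \<forall>b\<in>rep ` S. leq a b \<longrightarrow> leq b a \<longrightarrow> a = b"
    proof (intro ballI impI)
      fix a b assume "a \<in> rep ` S" "b \<in> rep ` S" "leq a b" "leq b a"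
      then obtain x y where "x \<in> S" "y \<in> S" "a = rep x" "b = rep y" "leq x y" "leq y x"
        using rep_le_iff by blast
      then show "a = b" using equiv_rep_eq[OF ST] unfolding rep_def by blast
    qed
    show "\<forall>a1\<in>rep ` K. \<forall>a2\<in>rep ` D. leq a1 a2"
      using assms(4) rep_le_iff unfolding S_def by blast
    show "\<not> (\<exists>c\<in>T. \<forall>a1\<in>rep ` K. \<forall>a2\<in>rep ` D. leq a1 c \<and> leq c a2)"
    proof
      assume "\<exists>c\<in>T. \<forall>a1\<in>rep ` K. \<forall>a2\<in>rep ` D. leq a1 c \<and> leq c a2"
      then obtain c where c: "c \<in> T" "\<forall>a1\<in>rep ` K. \<forall>a2\<in>rep ` D. leq a1 c \<and> leq c a2"
        by blast
      have "leq k c" if "k \<in> K" for k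
      proof -
        have "k \<in> S" "leq (rep k) c" using that c(2) assms(6) unfolding S_def by blast+
        then show ?thesis using trans[OF _ _ c(1) rep(2)] rep(1) ST by blast
      qed
      moreover have "leq c d" if "d \<in> D" for d
      proof -
        have "d \<in> S" "leq c (rep d)" using that c(2) assms(5) unfolding S_def by blast+
        then show ?thesis using trans[OF c(1) _ _ _ rep(3)] rep(1) ST by blast
      qed
      ultimately show False using no_between c(1) by blast
    qed
  qed
  then show ?thesis unfolding rep_def S_def .
qed

end

locale rooted_preordered_set = preordered_set +
  fixes rt :: 'a
  assumes root_in: "rt \<in> T" and root_le: "t \<in> T \<Longrightarrow> leq rt t"
begin

text \<open>By induction on the cardinality: an unbounded chain all of whose smaller subchains are
  bounded contains an unbounded strictly increasing sequence of length its cardinality.\<close>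

lemma indexed_chain_bounded_below_t:
  assumes "card_below_t T leq A"
  shows "J \<subseteq> A \<Longrightarrow> h ` J \<subseteq> T \<Longrightarrow> is_chain (h ` J) \<Longrightarrow> \<exists>u\<in>T. \<forall>j\<in>J. leq (h j) u"
proof (induction J arbitrary: h rule: wf_induct[OF wf_inv_image[OF wf_ordLess, of card_of]])
  case (1 J)
  show ?case
  proof (cases "finite J")
    case True
    show ?thesis
    proof (cases "J = {}")
      case True
      then show ?thesis using root_in by blast
    next
      case False
      then obtain m where "m \<in> h ` J" "\<forall>c\<in>h ` J. leq c m"
        using finite_chain_has_greatest[OF finite_imageI[OF \<open>finite J\<close>] _ 1(3,4)] by blast
      then show ?thesis using 1(3) by blast
    qed
  next
    case infinite: False
    show ?thesis
    proof (rule ccontr)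
      assume unbounded: "\<not> ?thesis"
      obtain r where r: "card_order_on J r" using card_order_on by blast
      have small_bounded: "\<exists>u\<in>T. \<forall>j\<in>X. leq (h j) u" if "X \<subseteq> J" "|X| <o |J|" for X
      proof -
        have "X \<subseteq> A" "h ` X \<subseteq> T" "is_chain (h ` X)"
          using that 1(2,3) chain_subset[OF 1(4) image_mono[OF that(1)]] by auto
        moreover have "(X, J) \<in> inv_image ordLess card_of" using that(2) by simp
        ultimately show ?thesis using 1(1) by blast
      qed
      have "unbounded_seq T leq J r"
        using unbounded_seq_of_unbounded_chain[OF 1(3,4) unbounded small_bounded r] .
      then show False using assms 1(2) infinite r unfolding card_below_t_def by blast
    qed
  qed
qed

lemma chain_bounded_below_t:
  assumes "card_below_t T leq A" "K \<subseteq> T" "is_chain K" "|K| \<le>o |A|"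
  shows "\<exists>u\<in>T. \<forall>k\<in>K. leq k u"
proof -
  obtain g where g: "inj_on g K" "g ` K \<subseteq> A"
    using assms(4) unfolding card_of_ordLeq[symmetric] by blast
  have "inv_into K g ` g ` K = K" using g(1) by simp
  then have "inv_into K g ` g ` K \<subseteq> T" "is_chain (inv_into K g ` g ` K)"
    using assms(2,3) by simp_all
  then obtain u where u: "u \<in> T" "\<forall>j\<in>g ` K. leq (inv_into K g j) u"
    using indexed_chain_bounded_below_t[OF assms(1) g(2), where h = "inv_into K g"] by blast
  have "leq k u" if "k \<in> K" for k
    using u(2) inv_into_f_f[OF g(1) that] that by force
  then show ?thesis using u(1) by blast
qed

lemma interpolate_below_p:
  assumes below_p: "card_below_p T leq A"
    and K: "K \<subseteq> T" "is_chain K" "|K| \<le>o |A|" "\<exists>u\<in>T. \<forall>k\<in>K. leq k u"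
    and D: "D \<subseteq> T" "is_chain D" "|D| \<le>o |A|"
    and KD: "\<forall>k\<in>K. \<forall>d\<in>D. leq k d"
  shows "\<exists>c\<in>T. (\<forall>k\<in>K. leq k c) \<and> (\<forall>d\<in>D. leq c d)"
proof (rule ccontr)
  assume no_between: "\<not> ?thesis"
  have nonempty: "K \<noteq> {}" "D \<noteq> {}"
  proof -
    show "K \<noteq> {}"
    proof
      assume "K = {}"
      then have "(\<forall>k\<in>K. leq k rt) \<and> (\<forall>d\<in>D. leq rt d)" using root_le D(1) by blast
      then show False using no_between root_in by blast
    qed
    show "D \<noteq> {}" using no_between K(4) by blast
  qed
  have no_greatest: "\<not> (\<exists>k0\<in>K. \<forall>k\<in>K. leq k k0)"
  proof
    assume "\<exists>k0\<in>K. \<forall>k\<in>K. leq k k0"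
    then obtain k0 where "k0 \<in> K" "\<forall>k\<in>K. leq k k0" by blast
    then show False using no_between KD K(1) by blast
  qed
  have no_least: "\<not> (\<exists>d0\<in>D. \<forall>d\<in>D. leq d0 d)"
  proof
    assume "\<exists>d0\<in>D. \<forall>d\<in>D. leq d0 d"
    then obtain d0 where "d0 \<in> D" "\<forall>d\<in>D. leq d0 d" by blast
    then show False using no_between KD D(1) by blast
  qed
  let ?S = "K \<union> D"
  have S: "?S \<subseteq> T" "is_chain ?S"
  proof -
    show "?S \<subseteq> T" using K(1) D(1) by blast
    have "leq x y \<or> leq y x" if "x \<in> ?S" "y \<in> ?S" for x y
      using that K(2) D(2) KD unfolding chain_def by blast
    then show "is_chain ?S" unfolding chain_def by blast
  qed
  have "precut T leq (equiv_rep leq ?S ` K) (equiv_rep leq ?S ` D)"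
    using precut_equiv_rep_images[OF K(1) D(1) S(2) KD nonempty no_between] .
  moreover have "cf_inf_le leq (equiv_rep leq ?S ` K) A"
    using cf_inf_le_equiv_rep_image[OF _ S nonempty(1) no_greatest K(3)] by blast
  moreover have "cf_inf_le (\<lambda>x y. leq y x) (equiv_rep leq ?S ` D) A"
  proof -
    have "Complete_Partial_Order.chain (\<lambda>x y. leq y x) ?S"
      using S(2) unfolding chain_dual[of leq] .
    moreover have "\<not> (\<exists>d0\<in>D. \<forall>d\<in>D. (\<lambda>x y. leq y x) d d0)" using no_least by simp
    ultimately show ?thesis
      using preordered_set.cf_inf_le_equiv_rep_image[OF dual _ S(1) _ nonempty(2) _ D(3)]
      unfolding equiv_rep_dual[of leq] by blast
  qed
  ultimately show False using below_p unfolding card_below_p_def by blast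
qed

end

definition satisfies :: "'a \<Rightarrow> 'a fml \<times> 'a list \<Rightarrow> bool" where
  "satisfies b x \<longleftrightarrow> snd (fst x) b (snd x)"

lemma realized_iff_satisfies: "realized B q \<longleftrightarrow> (\<exists>b\<in>B. \<forall>x\<in>q. satisfies b x)"
  unfolding realized_def satisfies_def by (simp add: case_prod_beta)

locale rsp_small_type =
  fixes T N :: "'a set" and leq R :: "'a \<Rightarrow> 'a \<Rightarrow> bool" and rt :: 'a
    and Delta :: "'a fml set" and p :: "('a fml \<times> 'a list) set"
  assumes rsp: "RSP T leq rt N R Delta"
    and p_inst: "p \<subseteq> inst Delta N"
    and below_t: "card_below_t T leq p"
    and below_p: "card_below_p T leq p"
    and p_fin_sat: "fin_sat N p"
begin

lemma
  shows rsp_refl: "\<forall>t\<in>T. leq t t"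
    and rsp_trans: "\<forall>s\<in>T. \<forall>t\<in>T. \<forall>u\<in>T. leq s t \<longrightarrow> leq t u \<longrightarrow> leq s u"
    and rsp_root: "rt \<in> T" "\<forall>t\<in>T. leq rt t"
    and conj_closed: "\<forall>n1 phi1 n2 phi2. (n1, phi1) \<in> Delta \<longrightarrow> (n2, phi2) \<in> Delta \<longrightarrow>
        (n1 + n2, \<lambda>x ys. phi1 x (take n1 ys) \<and> phi2 x (drop n1 ys)) \<in> Delta"
    and R_field: "\<forall>b t. R b t \<longrightarrow> b \<in> N \<and> t \<in> T"
    and Rset_antimono: "\<forall>s\<in>T. \<forall>t\<in>T. leq s t \<longrightarrow> Rset R t \<subseteq> Rset R s"
    and Rset_nonempty: "\<forall>t\<in>T. Rset R t \<noteq> {}"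
    and refine: "\<forall>s\<in>T. \<forall>n phi as. (n, phi) \<in> Delta \<longrightarrow> as \<in> params N n \<longrightarrow>
        (\<exists>b\<in>Rset R s. phi b as) \<longrightarrow> (\<exists>t\<in>T. leq s t \<and> Rset R t = {b\<in>Rset R s. phi b as})"
    and greatest_meeting_below: "\<forall>n phi. (n, phi) \<in> Delta \<longrightarrow>
        (\<exists>F. \<forall>t\<in>T. \<forall>as\<in>params N n. (\<exists>b\<in>N. phi b as) \<longrightarrow>
           (F t as \<in> T \<and> leq (F t as) t \<and> (\<exists>b\<in>Rset R (F t as). phi b as) \<and>
            (\<forall>s1\<in>T. leq s1 t \<longrightarrow> (\<exists>b\<in>Rset R s1. phi b as) \<longrightarrow> leq s1 (F t as))))"
  using rsp unfolding RSP_def by - (elim conjE, assumption)+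

sublocale rooted_preordered_set T leq rt
proof
  show "leq t t" if "t \<in> T" for t using rsp_refl that by blast
  show "leq s u" if "s \<in> T" "t \<in> T" "u \<in> T" "leq s t" "leq t u" for s t u
    using rsp_trans that by blast
  show "rt \<in> T" by (rule rsp_root(1))
  show "leq rt t" if "t \<in> T" for t using rsp_root(2) that by blast
qed

lemma Rset_subset: "Rset R t \<subseteq> N"
  using R_field unfolding Rset_def by blast

lemma finite_conjunction_in_Delta:
  assumes "finite q" "q \<noteq> {}" "q \<subseteq> inst Delta N"
  shows "\<exists>n phi as. (n, phi) \<in> Delta \<and> as \<in> params N n \<and>
    (\<forall>b. phi b as \<longleftrightarrow> (\<forall>x\<in>q. satisfies b x))"
  using assms
proof (induction q rule: finite_ne_induct)
  case (singleton x)
  obtain n phi as where "x = ((n, phi), as)" by (metis prod.collapse)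
  then show ?case using singleton by (auto simp: inst_def satisfies_def)
next
  case (insert x q)
  obtain n2 phi2 as2 where x: "x = ((n2, phi2), as2)" by (metis prod.collapse)
  obtain n1 phi1 as1 where q: "(n1, phi1) \<in> Delta" "as1 \<in> params N n1"
      "\<forall>b. phi1 b as1 \<longleftrightarrow> (\<forall>x\<in>q. satisfies b x)"
    using insert by blast
  have x_inst: "(n2, phi2) \<in> Delta" "as2 \<in> params N n2"
    using insert.prems x by (auto simp: inst_def)
  have "(n1 + n2, \<lambda>x ys. phi1 x (take n1 ys) \<and> phi2 x (drop n1 ys)) \<in> Delta"
    using conj_closed q(1) x_inst(1) by blast
  moreover have "as1 @ as2 \<in> params N (n1 + n2)"
    using q(2) x_inst(2) by (auto simp: params_def)
  moreover have "length as1 = n1" using q(2) by (simp add: params_def)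
  ultimately show ?case
    using q(3) x by (intro exI[of _ "n1 + n2"] exI exI[of _ "as1 @ as2"]) (auto simp: satisfies_def)
qed

definition good :: "'a \<Rightarrow> bool" where
  "good t \<longleftrightarrow> t \<in> T \<and> fin_sat (Rset R t) p"

lemma good_refine:
  assumes u: "good u" and x: "x \<in> p"
  obtains t where "good t" "leq u t" "\<forall>b\<in>Rset R t. satisfies b x"
proof -
  obtain n phi as where x_eq: "x = ((n, phi), as)" by (metis prod.collapse)
  have x_inst: "(n, phi) \<in> Delta" "as \<in> params N n"
    using x x_eq p_inst by (auto simp: inst_def)
  have "realized (Rset R u) {x}" using u x unfolding good_def fin_sat_def by blast
  then have "\<exists>b\<in>Rset R u. phi b as" using x_eq unfolding realized_def by simp
  moreover have "u \<in> T" using u unfolding good_def by blast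
  ultimately obtain t where t: "t \<in> T" "leq u t" "Rset R t = {b \<in> Rset R u. phi b as}"
    using refine x_inst by blast
  have "realized (Rset R t) q" if "q \<subseteq> p" "finite q" for q
  proof -
    have "realized (Rset R u) (insert x q)"
      using u x that unfolding good_def fin_sat_def by blast
    then show ?thesis using t(3) x_eq unfolding realized_def by auto
  qed
  then have "good t" using t(1) unfolding good_def fin_sat_def by blast
  moreover have "\<forall>b\<in>Rset R t. satisfies b x" using t(3) x_eq by (simp add: satisfies_def)
  ultimately show ?thesis using that t(2) by blast
qed

lemma realizing_node_below:
  assumes K: "\<forall>k\<in>K. good k" "\<forall>k\<in>K. leq k v" and v: "v \<in> T"
    and q: "q \<subseteq> p" "finite q" "q \<noteq> {}"
  obtains s where "s \<in> T" "leq s v" "realized (Rset R s) q" "\<forall>k\<in>K. leq k s"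
proof -
  obtain n phi as where phi: "(n, phi) \<in> Delta" "as \<in> params N n"
      "\<And>b. phi b as \<longleftrightarrow> (\<forall>x\<in>q. satisfies b x)"
    using finite_conjunction_in_Delta[OF q(2,3)] q(1) p_inst by blast
  have realized_iff_phi: "realized B q \<longleftrightarrow> (\<exists>b\<in>B. phi b as)" for B
    using phi(3) by (simp add: realized_iff_satisfies)
  have sat: "\<exists>b\<in>N. phi b as"
    using p_fin_sat q(1,2) realized_iff_phi unfolding fin_sat_def by blast
  obtain F where "\<forall>t\<in>T. \<forall>as\<in>params N n. (\<exists>b\<in>N. phi b as) \<longrightarrow>
      (F t as \<in> T \<and> leq (F t as) t \<and> (\<exists>b\<in>Rset R (F t as). phi b as) \<and>
       (\<forall>s1\<in>T. leq s1 t \<longrightarrow> (\<exists>b\<in>Rset R s1. phi b as) \<longrightarrow> leq s1 (F t as)))"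
    using greatest_meeting_below phi(1) by blast
  \<comment> \<open>the largest node below v whose R-set meets phi; every good k below v is such a node\<close>
  then have F: "F v as \<in> T" "leq (F v as) v" "\<exists>b\<in>Rset R (F v as). phi b as"
      "\<forall>s1\<in>T. leq s1 v \<longrightarrow> (\<exists>b\<in>Rset R s1. phi b as) \<longrightarrow> leq s1 (F v as)"
    using v phi(2) sat by blast+
  have "leq k (F v as)" if k: "k \<in> K" for k
  proof -
    have "realized (Rset R k) q" using K(1) k q(1,2) unfolding good_def fin_sat_def by blast
    then show ?thesis using F(4) K k realized_iff_phi unfolding good_def by blast
  qed
  then show ?thesis using that F(1,2,3) realized_iff_phi by blast
qed

lemma good_chain_bounded:
  assumes p: "infinite p"
    and K: "\<forall>k\<in>K. good k" "is_chain K" "|K| \<le>o |p|"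
  obtains v where "good v" "\<forall>k\<in>K. leq k v"
proof -
  have KT: "K \<subseteq> T" using K(1) unfolding good_def by blast
  have K_bounded: "\<exists>u\<in>T. \<forall>k\<in>K. leq k u"
    using chain_bounded_below_t[OF below_t KT K(2,3)] .
  define U where "U = {s \<in> T. \<forall>k\<in>K. leq k s}"
  define Q where "Q = {q. q \<subseteq> p \<and> finite q \<and> q \<noteq> {}}"
  obtain M where M: "M \<subseteq> Q \<times> U" "single_valued M" "is_chain (Range M)"
      "\<forall>(q, s)\<in>M. realized (Rset R s) q"
    and maximal: "\<And>q s. q \<in> Q \<Longrightarrow> q \<notin> Domain M \<Longrightarrow> s \<in> U \<Longrightarrow>
       is_chain (insert s (Range M)) \<Longrightarrow> realized (Rset R s) q \<Longrightarrow> False"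
    using maximal_function_with_chain_range[of Q U leq "\<lambda>q s. realized (Rset R s) q"] by blast
  have "Q \<subseteq> Fpow p" unfolding Q_def Fpow_def by blast
  then have "|Q| \<le>o |Fpow p|" by (rule card_of_mono1)
  moreover have "|Fpow p| =o |p|" using eqpoll_Fpow[OF p] unfolding eqpoll_iff_card_of_ordIso .
  ultimately have Q_card: "|Q| \<le>o |p|" by (rule ordLeq_ordIso_trans)
  have "|Domain M| \<le>o |Q|" using M(1) by (intro card_of_mono1) blast
  then have "|Range M| \<le>o |p|"
    using ordLeq_transitive[OF card_of_Range_le_Domain[OF M(2)] ordLeq_transitive[OF _ Q_card]]
    by blast
  moreover have RT: "Range M \<subseteq> T" and KR: "\<forall>k\<in>K. \<forall>d\<in>Range M. leq k d"
    using M(1) unfolding U_def by blast+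
  ultimately obtain v where v: "v \<in> T" "\<forall>k\<in>K. leq k v" "\<forall>d\<in>Range M. leq v d"
    using interpolate_below_p[OF below_p KT K(2,3) K_bounded RT M(3) _ KR] by blast
  have "Domain M = Q"
  proof (rule ccontr)
    assume "Domain M \<noteq> Q"
    then obtain q where q: "q \<in> Q" "q \<notin> Domain M" using M(1) by blast
    have "q \<subseteq> p" "finite q" "q \<noteq> {}" using q(1) unfolding Q_def by blast+
    then obtain s where s: "s \<in> T" "leq s v" "realized (Rset R s) q" "\<forall>k\<in>K. leq k s"
      using realizing_node_below[OF K(1) v(2,1)] by blast
    have "leq s d" if "d \<in> Range M" for d
      using trans[OF s(1) v(1) _ s(2)] v(3) that RT by blast
    then have "is_chain (insert s (Range M))"
      using chain_insert[OF M(3) refl[OF s(1)]] by blast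
    moreover have "s \<in> U" using s(1,4) unfolding U_def by blast
    ultimately show False using maximal[OF q] s(3) by blast
  qed
  have "realized (Rset R v) q" if q: "q \<subseteq> p" "finite q" for q
  proof (cases "q = {}")
    case True
    then show ?thesis using Rset_nonempty v(1) unfolding realized_def by auto
  next
    case False
    then have "q \<in> Domain M" using \<open>Domain M = Q\<close> q unfolding Q_def by simp
    then obtain t where t: "(q, t) \<in> M" by blast
    then have "t \<in> Range M" by blast
    then have "t \<in> T" "leq v t" using v(3) RT by blast+
    then have "Rset R t \<subseteq> Rset R v" using Rset_antimono v(1) by blast
    then show ?thesis using M(4) t unfolding realized_def by blast
  qed
  then have "good v" using v(1) unfolding good_def fin_sat_def by blast
  then show ?thesis using that v(2) by blast
qed

lemma realized_if_infinite:
  assumes p: "infinite p"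
  shows "realized N p"
proof -
  obtain M where M: "M \<subseteq> p \<times> Collect good" "single_valued M" "is_chain (Range M)"
      "\<forall>(x, s)\<in>M. \<forall>b\<in>Rset R s. satisfies b x"
    and maximal: "\<And>x s. x \<in> p \<Longrightarrow> x \<notin> Domain M \<Longrightarrow> s \<in> Collect good \<Longrightarrow>
       is_chain (insert s (Range M)) \<Longrightarrow> \<forall>b\<in>Rset R s. satisfies b x \<Longrightarrow> False"
    using maximal_function_with_chain_range[of p "Collect good" leq "\<lambda>x s. \<forall>b\<in>Rset R s. satisfies b x"]
    by blast
  have "|Domain M| \<le>o |p|" using M(1) by (intro card_of_mono1) blast
  then have "|Range M| \<le>o |p|"
    using ordLeq_transitive[OF card_of_Range_le_Domain[OF M(2)]] by blast
  moreover have good_M: "\<forall>s\<in>Range M. good s" using M(1) by blast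
  ultimately obtain u where u: "good u" "\<forall>s\<in>Range M. leq s u"
    using good_chain_bounded[OF p _ M(3)] by blast
  have uT: "u \<in> T" using u(1) unfolding good_def by blast
  have "Domain M = p"
  proof (rule ccontr)
    assume "Domain M \<noteq> p"
    then obtain x where x: "x \<in> p" "x \<notin> Domain M" using M(1) by blast
    obtain t where t: "good t" "leq u t" "\<forall>b\<in>Rset R t. satisfies b x"
      using good_refine[OF u(1) x(1)] by blast
    have tT: "t \<in> T" using t(1) unfolding good_def by blast
    have "leq s t" if "s \<in> Range M" for s
      using trans[OF _ uT tT u(2)[rule_format, OF that] t(2)] that good_M unfolding good_def
      by blast
    then have "is_chain (insert t (Range M))"
      using chain_insert[OF M(3) refl[OF tT]] by blast
    then show False using maximal[OF x] t(1,3) by blast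
  qed
  obtain b where b: "b \<in> Rset R u" using Rset_nonempty uT by blast
  have "satisfies b x" if x: "x \<in> p" for x
  proof -
    have "x \<in> Domain M" using x \<open>Domain M = p\<close> by simp
    then obtain s where s: "(x, s) \<in> M" by blast
    then have "s \<in> T" "leq s u" using good_M u(2) unfolding good_def by blast+
    then have "b \<in> Rset R s" using b Rset_antimono uT by blast
    then show ?thesis using M(4) s by blast
  qed
  then show ?thesis using b Rset_subset unfolding realized_iff_satisfies by blast
qed

end


theorem claim1p8:
  fixes T N :: "'a set" and le R :: "'a \<Rightarrow> 'a \<Rightarrow> bool" and rt :: 'a
    and Delta :: "'a fml set" and p :: "('a fml \<times> 'a list) set"
  assumes "RSP T le rt N R Delta"
    and "p \<subseteq> inst Delta N"
    and "card_below_t T le p"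
    and "card_below_p T le p"
    and "fin_sat N p"
  shows "realized N p"
proof (cases "finite p")
  case True
  then show ?thesis using assms(5) unfolding fin_sat_def by blast
next
  case False
  interpret rsp_small_type T N le R rt Delta p
    using assms by unfold_locales
  show ?thesis using realized_if_infinite[OF False] .
qed

end
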